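(* Let $d,r$ be positive integers with $d\le q$ and $r\le\binom{m+d}{d}$. If $r<\binom{m+d}{d}$, let $i,j$ be the unique integers with $r=j+\sum_{a=1}^{i}\binom{m+d-a}{d-1}$, $0\le i\le m$ and $0\le j<\binom{m+d-i-1}{d-1}$; if $r=\binom{m+d}{d}$, let $i=m$ and $j=1$. Then $$e_r(d,m)\ge H_j(d-1,m-i)+\mathsf{p}_{m-i-1}.$$
   Context: Let $q$ be a prime power, $\mathbb{F}_q$ the finite field with $q$ elements, $m$ a positive integer. For $j\in\mathbb{Z}$, $\mathsf{p}_j=q^j+\dots+q+1$ if $j\ge0$ and $\mathsf{p}_j=0$ if $j<0$. $e_r(d,m)$ is the maximum, over all families of $r$ linearly independent homogeneous polynomials $F_1,\dots,F_r$ of degree $d$ in $\mathbb{F}_q[x_0,\dots,x_m]$, of the number of points of $\mathbb{P}^m(\mathbb{F}_q)$ at which all $F_i$ vanish. For nonnegative integers $d,n$ and $1\le s\le\binom{n+d}{n}$ (with $n\ge1$, $d\ge 1$, $d<q$): $H_s(d,n)=\sum_{k=1}^{n}\alpha_kq^{n-k}$, where $(\alpha_1,\dots,\alpha_n)$ is the $s$-th element, in descending lexicographic order, of the set of $n$-tuples of integers $(\beta_1,\dots,\beta_n)$ with $0\le\beta_k<q$ and $\beta_1+\dots+\beta_n\le d$. Conventions: $H_0(d,n)=q^n$ for all $d,n\ge0$, and $H_1(d,n)=0$ if $d=0$ or $n=0$. *)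

theory Defs
  imports Main
begin

text \<open>Field F_q is modelled by a finite field type 'k; q = CARD('k).
Points of F_q^(m+1) are functions nat => 'k vanishing outside {0..m}.
A monomial of degree d in x_0..x_m is an exponent vector a : nat => nat
supported on {0..m} with total degree d.\<close>

definition mons :: "nat \<Rightarrow> nat \<Rightarrow> (nat \<Rightarrow> nat) set" where
  "mons m d = {a. (\<forall>i>m. a i = 0) \<and> (\<Sum>i\<le>m. a i) = d}"

definition hom_polys :: "nat \<Rightarrow> nat \<Rightarrow> ((nat \<Rightarrow> nat) \<Rightarrow> 'k::field) set" where
  "hom_polys m d = {c. \<forall>a. a \<notin> mons m d \<longrightarrow> c a = 0}"

definition peval :: "nat \<Rightarrow> nat \<Rightarrow> ((nat \<Rightarrow> nat) \<Rightarrow> 'k::field) \<Rightarrow> (nat \<Rightarrow> 'k) \<Rightarrow> 'k" where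
  "peval m d c x = (\<Sum>a\<in>mons m d. c a * (\<Prod>i\<le>m. x i ^ a i))"

definition proj_pts :: "nat \<Rightarrow> (nat \<Rightarrow> 'k::field) set set" where
  "proj_pts m = (\<lambda>x. {(\<lambda>i. c * x i) | c. c \<noteq> 0}) `
      {x. (\<forall>i>m. x i = 0) \<and> (\<exists>i\<le>m. x i \<noteq> 0)}"

definition lin_indep :: "nat \<Rightarrow> (nat \<Rightarrow> ((nat \<Rightarrow> nat) \<Rightarrow> 'k::field)) \<Rightarrow> bool" where
  "lin_indep r F = (\<forall>c :: nat \<Rightarrow> 'k. (\<forall>a. (\<Sum>l<r. c l * F l a) = 0) \<longrightarrow> (\<forall>l<r. c l = 0))"

definition n_zeros :: "nat \<Rightarrow> nat \<Rightarrow> nat \<Rightarrow> (nat \<Rightarrow> ((nat \<Rightarrow> nat) \<Rightarrow> 'k::field)) \<Rightarrow> nat" where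
  "n_zeros r d m F = card {P \<in> proj_pts m. \<forall>x\<in>P. \<forall>l<r. peval m d (F l) x = 0}"

definition e_max :: "'k::{finite,field} itself \<Rightarrow> nat \<Rightarrow> nat \<Rightarrow> nat \<Rightarrow> nat" where
  "e_max TYPE('k) r d m = Max {n_zeros r d m F | F :: nat \<Rightarrow> ((nat \<Rightarrow> nat) \<Rightarrow> 'k).
       (\<forall>l<r. F l \<in> hom_polys m d) \<and> lin_indep r F}"

definition tuples :: "nat \<Rightarrow> nat \<Rightarrow> nat \<Rightarrow> nat list set" where
  "tuples q d n = {b. length b = n \<and> (\<forall>x\<in>set b. x < q) \<and> sum_list b \<le> d}"

definition lex_gt :: "nat list \<Rightarrow> nat list \<Rightarrow> bool" where
  "lex_gt g b = ((b, g) \<in> lexord {(x, y). x < y})"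

text \<open>s-th element (1-based) in descending lexicographic order.\<close>
definition nth_desc :: "nat \<Rightarrow> nat \<Rightarrow> nat \<Rightarrow> nat \<Rightarrow> nat list" where
  "nth_desc q d n s = (THE b. b \<in> tuples q d n \<and> card {g \<in> tuples q d n. lex_gt g b} = s - 1)"

definition H :: "nat \<Rightarrow> nat \<Rightarrow> nat \<Rightarrow> nat \<Rightarrow> nat" where
  "H q s d n = (if s = 0 then q ^ n
     else if s = 1 \<and> (d = 0 \<or> n = 0) then 0
     else (let al = nth_desc q d n s in \<Sum>k<n. al ! k * q ^ (n - 1 - k)))"

definition pp :: "nat \<Rightarrow> int \<Rightarrow> nat" where
  "pp q j = (if j < 0 then 0 else \<Sum>k\<le>nat j. q ^ k)"

end

theory Submission
  imports Defs "HOL-Library.List_Lexorder"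
begin

(* Identify F_q with {0,...,q-1} through a bijection a and put n = m - i.  As the r forms take
   all degree-d monomials involving one of x_0,...,x_(i-1), and, for each of the j lexicographically
   largest tuples beta >= alpha (alpha the j-th tuple of weight at most d - 1), the form
     G_beta = x_i^(d - |beta|) * prod_k prod_(t < beta_k) (x_(i+1+k) - a_t x_i).
   All of them vanish on the linear subspace x_0 = ... = x_i = 0, which has p_(n-1) points, and at
   the points (0,...,0,1,a_(c_1),...,a_(c_n)) with c < alpha lexicographically, because c < alpha <= beta
   forces c_k < beta_k for some k; counting such c in base q gives exactly H_j(d-1,n) points.
   The monomials are independent coefficientwise, and on x_0 = ... = x_(i-1) = 0 the form G_beta is
   nonzero at the point of c only if beta <= c componentwise, which makes the G_beta triangular
   with respect to |beta|. *)

definition monomial :: "nat \<Rightarrow> (nat \<Rightarrow> nat) \<Rightarrow> (nat \<Rightarrow> 'k::field) \<Rightarrow> 'k" where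
  "monomial m a x = (\<Prod>t\<le>m. x t ^ a t)"

definition hom_poly_fun :: "nat \<Rightarrow> nat \<Rightarrow> ((nat \<Rightarrow> 'k::field) \<Rightarrow> 'k) \<Rightarrow> bool" where
  "hom_poly_fun m d f \<longleftrightarrow> (\<exists>c. peval m d c = f)"

lemma peval_eq_sum_monomial: "peval m d c x = (\<Sum>a\<in>mons m d. c a * monomial m a x)"
  by (simp add: peval_def monomial_def)

lemma finite_mons: "finite (mons m d)"
proof -
  have "mons m d \<subseteq> {a. \<forall>t. (t \<in> {..m} \<longrightarrow> a t \<in> {..d}) \<and> (t \<notin> {..m} \<longrightarrow> a t = 0)}"
  proof
    fix a assume a: "a \<in> mons m d"
    have "a t \<le> d" if "t \<le> m" for t
      using a that member_le_sum[of t "{..m}" a] unfolding mons_def by auto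
    then show "a \<in> {a. \<forall>t. (t \<in> {..m} \<longrightarrow> a t \<in> {..d}) \<and> (t \<notin> {..m} \<longrightarrow> a t = 0)}"
      using a unfolding mons_def by auto
  qed
  then show ?thesis
    by (rule finite_subset) (rule finite_set_of_finite_funs; simp)
qed

lemma mons_add: "a \<in> mons m d \<Longrightarrow> b \<in> mons m e \<Longrightarrow> (\<lambda>t. a t + b t) \<in> mons m (d + e)"
  by (simp add: mons_def sum.distrib)

lemma monomial_add: "monomial m (\<lambda>t. a t + b t) x = monomial m a x * monomial m b x"
  by (simp add: monomial_def power_add prod.distrib)

lemma peval_delta:
  assumes "a \<in> mons m d"
  shows "peval m d (\<lambda>b. if b = a then 1 else 0) = monomial m a"
proof
  fix x
  have "(\<Sum>b\<in>mons m d. (if b = a then 1 else 0) * monomial m b x)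
      = (\<Sum>b\<in>mons m d. if b = a then monomial m b x else 0)"
    by (rule sum.cong) auto
  also have "\<dots> = monomial m a x"
    using assms by (simp add: finite_mons)
  finally show "peval m d (\<lambda>b. if b = a then 1 else 0) x = monomial m a x"
    by (simp add: peval_eq_sum_monomial)
qed

lemma peval_delta_eq_0:
  assumes "a \<in> mons m d" "a t \<noteq> 0" "x t = 0"
  shows "peval m d (\<lambda>b. if b = a then 1 else 0) x = 0"
proof -
  have "\<forall>t>m. a t = 0"
    using assms(1) by (simp add: mons_def)
  then have "t \<le> m"
    using assms(2) by (meson not_le)
  then have "monomial m a x = 0"
    unfolding monomial_def using assms(2,3) by (intro prod_zero) auto
  then show ?thesis
    using fun_cong[OF peval_delta[OF assms(1)], of x] by simp
qed

lemma peval_homogeneous: "peval m d c (\<lambda>t. s * x t) = s ^ d * peval m d c x"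
proof -
  have "monomial m a (\<lambda>t. s * x t) = s ^ d * monomial m a x" if "a \<in> mons m d" for a
  proof -
    have "(\<Prod>t\<le>m. s ^ a t) = s ^ d"
      using that by (simp add: mons_def power_sum[symmetric])
    then show ?thesis
      by (simp add: monomial_def power_mult_distrib prod.distrib)
  qed
  then show ?thesis
    by (simp add: peval_eq_sum_monomial sum_distrib_left mult.left_commute)
qed

lemma peval_linear_combination:
  "peval m d (\<lambda>b. \<Sum>l<r. cs l * F l b) x = (\<Sum>l<r. cs l * peval m d (F l) x)"
  unfolding peval_def
  by (simp add: sum_distrib_right sum_distrib_left mult.assoc sum.swap[of _ "{..<r}"])

lemma hom_poly_fun_in_hom_polys:
  assumes "hom_poly_fun m d f"
  obtains c where "c \<in> hom_polys m d" "peval m d c = f"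
proof -
  obtain c where c: "peval m d c = f"
    using assms unfolding hom_poly_fun_def by blast
  let ?c = "\<lambda>a. if a \<in> mons m d then c a else 0"
  have "peval m d ?c = f"
    using c unfolding peval_def[abs_def] by simp
  moreover have "?c \<in> hom_polys m d"
    by (simp add: hom_polys_def)
  ultimately show thesis
    using that by blast
qed

lemma hom_poly_fun_monomial: "a \<in> mons m d \<Longrightarrow> hom_poly_fun m d (monomial m a)"
  unfolding hom_poly_fun_def by (blast intro: peval_delta)

lemma hom_poly_fun_scale: "hom_poly_fun m d f \<Longrightarrow> hom_poly_fun m d (\<lambda>x. s * f x)"
proof -
  assume "hom_poly_fun m d f"
  then obtain c where "peval m d c = f"
    unfolding hom_poly_fun_def by blast
  then have "peval m d (\<lambda>a. s * c a) = (\<lambda>x. s * f x)"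
    by (auto simp: peval_def sum_distrib_left mult.assoc)
  then show ?thesis
    unfolding hom_poly_fun_def by blast
qed

lemma hom_poly_fun_sum:
  assumes "finite A" "\<forall>a\<in>A. hom_poly_fun m d (g a)"
  shows "hom_poly_fun m d (\<lambda>x. \<Sum>a\<in>A. g a x)"
proof -
  obtain c where c: "\<forall>a\<in>A. peval m d (c a) = g a"
    using bchoice[OF assms(2)[unfolded hom_poly_fun_def]] by blast
  have "peval m d (\<lambda>b. \<Sum>a\<in>A. c a b) x = (\<Sum>a\<in>A. peval m d (c a) x)" for x
    by (simp add: peval_def sum_distrib_right sum.swap[of _ A])
  then have "peval m d (\<lambda>b. \<Sum>a\<in>A. c a b) x = (\<Sum>a\<in>A. g a x)" for x
    using c by simp
  then show ?thesis
    unfolding hom_poly_fun_def by blast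
qed

lemma hom_poly_fun_add:
  assumes "hom_poly_fun m d f" "hom_poly_fun m d g"
  shows "hom_poly_fun m d (\<lambda>x. f x + g x)"
  using hom_poly_fun_sum[of "{True, False}" m d "\<lambda>b. if b then f else g"] assms by simp

lemma hom_poly_fun_mult:
  assumes "hom_poly_fun m d f" "hom_poly_fun m e g"
  shows "hom_poly_fun m (d + e) (\<lambda>x. f x * g x)"
proof -
  obtain c c' where f: "f = peval m d c" and g: "g = peval m e c'"
    using assms unfolding hom_poly_fun_def by metis
  have "f x * g x = (\<Sum>a\<in>mons m d. \<Sum>b\<in>mons m e. c a * c' b * monomial m (\<lambda>t. a t + b t) x)"
    for x
    by (simp add: f g peval_eq_sum_monomial monomial_add sum_distrib_left sum_distrib_right mult_ac)
  moreover have "hom_poly_fun m (d + e)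
      (\<lambda>x. \<Sum>a\<in>mons m d. \<Sum>b\<in>mons m e. c a * c' b * monomial m (\<lambda>t. a t + b t) x)"
    by (intro hom_poly_fun_sum ballI hom_poly_fun_scale hom_poly_fun_monomial mons_add finite_mons)
  ultimately show ?thesis
    by simp
qed

lemma hom_poly_fun_one: "hom_poly_fun m 0 (\<lambda>x. 1)"
proof -
  have "(\<lambda>_. 0) \<in> mons m 0"
    by (simp add: mons_def)
  from hom_poly_fun_monomial[OF this] show ?thesis
    by (simp add: monomial_def[abs_def])
qed

lemma hom_poly_fun_var: "u \<le> m \<Longrightarrow> hom_poly_fun m 1 (\<lambda>x. x u)"
proof -
  assume u: "u \<le> m"
  then have "(\<lambda>t. if t = u then 1 else 0) \<in> mons m 1"
    by (simp add: mons_def)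
  moreover have "monomial m (\<lambda>t. if t = u then 1 else 0) = (\<lambda>x :: nat \<Rightarrow> 'a. x u)"
  proof
    fix x :: "nat \<Rightarrow> 'a"
    have "monomial m (\<lambda>t. if t = u then 1 else 0) x = (\<Prod>t\<le>m. if t = u then x t else 1)"
      unfolding monomial_def by (rule prod.cong) auto
    then show "monomial m (\<lambda>t. if t = u then 1 else 0) x = x u"
      using u by simp
  qed
  ultimately show ?thesis
    using hom_poly_fun_monomial by metis
qed

lemma hom_poly_fun_linear_form:
  "u \<le> m \<Longrightarrow> v \<le> m \<Longrightarrow> hom_poly_fun m 1 (\<lambda>x. x u - s * x v)"
  using hom_poly_fun_add[OF hom_poly_fun_var hom_poly_fun_scale[OF hom_poly_fun_var], of u m v "- s"]
  by simp

lemma hom_poly_fun_prod: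
  assumes "finite A" "\<forall>a\<in>A. hom_poly_fun m (deg a) (f a)"
  shows "hom_poly_fun m (\<Sum>a\<in>A. deg a) (\<lambda>x. \<Prod>a\<in>A. f a x)"
  using assms by (induction A rule: finite_induct) (simp_all add: hom_poly_fun_one hom_poly_fun_mult)

lemma hom_poly_fun_power:
  assumes "hom_poly_fun m d f"
  shows "hom_poly_fun m (e * d) (\<lambda>x. f x ^ e)"
proof (induction e)
  case 0
  then show ?case
    by (simp add: hom_poly_fun_one)
next
  case (Suc e)
  then show ?case
    using hom_poly_fun_mult[OF assms Suc.IH] by simp
qed

definition chart_pt :: "nat \<Rightarrow> nat \<Rightarrow> 'k::field list \<Rightarrow> nat \<Rightarrow> 'k" where
  "chart_pt k m v t =
     (if t < k then 0 else if t = k then 1 else if t \<le> m then v ! (t - Suc k) else 0)"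

definition proj_class :: "(nat \<Rightarrow> 'k::field) \<Rightarrow> (nat \<Rightarrow> 'k) set" where
  "proj_class x = {(\<lambda>i. c * x i) | c. c \<noteq> 0}"

lemma chart_pt_below: "t < k \<Longrightarrow> chart_pt k m v t = 0"
  by (simp add: chart_pt_def)

lemma chart_pt_lead: "chart_pt k m v k = 1"
  by (simp add: chart_pt_def)

lemma chart_pt_entry: "k + t < m \<Longrightarrow> chart_pt k m v (Suc (k + t)) = v ! t"
  by (simp add: chart_pt_def)

lemma chart_pt_eq_scaled:
  assumes "chart_pt k m v = (\<lambda>t. s * chart_pt k' m v' t)"
  shows "chart_pt k m v = chart_pt k' m v'"
proof -
  have "\<not> k < k'"
    using fun_cong[OF assms, of k] by (auto simp: chart_pt_lead chart_pt_below)
  moreover have "\<not> k' < k"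
    using fun_cong[OF assms, of k'] fun_cong[OF assms, of k]
    by (auto simp: chart_pt_lead chart_pt_below)
  ultimately have "s = 1"
    using fun_cong[OF assms, of k] by (simp add: chart_pt_lead)
  then show ?thesis
    using assms by simp
qed

lemma chart_pt_neq: "k \<noteq> k' \<Longrightarrow> chart_pt k m v \<noteq> chart_pt k' m v'"
proof
  assume "k \<noteq> k'" and eq: "chart_pt k m v = chart_pt k' m v'"
  then consider "k < k'" | "k' < k"
    by linarith
  then show False
    using fun_cong[OF eq, of k] fun_cong[OF eq, of k']
    by cases (simp_all add: chart_pt_lead chart_pt_below)
qed

lemma inj_on_chart_pt: "inj_on (chart_pt k m) {v. length v = m - k}"
proof (rule inj_onI)
  fix v v' assume v: "v \<in> {v. length v = m - k}" "v' \<in> {v. length v = m - k}"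
    and eq: "chart_pt k m v = chart_pt k m v'"
  show "v = v'"
  proof (rule nth_equalityI)
    show "length v = length v'"
      using v by simp
    fix t assume "t < length v"
    then have "k + t < m"
      using v by simp
    then show "v ! t = v' ! t"
      using fun_cong[OF eq, of "Suc (k + t)"] by (simp add: chart_pt_entry)
  qed
qed

lemma card_chart_pts:
  "card (chart_pt k m ` {v :: 'k::{finite,field} list. length v = m - k}) = card (UNIV :: 'k set) ^ (m - k)"
proof -
  have "card (chart_pt k m ` {v :: 'k list. length v = m - k}) = card {v :: 'k list. length v = m - k}"
    by (rule card_image[OF inj_on_chart_pt])
  also have "\<dots> = card (UNIV :: 'k set) ^ (m - k)"
    using card_lists_length_eq[of "UNIV :: 'k set" "m - k"] by simp
  finally show ?thesis .
qed

lemma finite_proj_pts: "finite (proj_pts m :: (nat \<Rightarrow> 'k::{finite,field}) set set)"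
proof -
  have "{x :: nat \<Rightarrow> 'k. (\<forall>i>m. x i = 0) \<and> (\<exists>i\<le>m. x i \<noteq> 0)}
      \<subseteq> {x. \<forall>i. (i \<in> {..m} \<longrightarrow> x i \<in> UNIV) \<and> (i \<notin> {..m} \<longrightarrow> x i = 0)}"
    by auto
  then have "finite {x :: nat \<Rightarrow> 'k. (\<forall>i>m. x i = 0) \<and> (\<exists>i\<le>m. x i \<noteq> 0)}"
    by (rule finite_subset) (rule finite_set_of_finite_funs; simp)
  then show ?thesis
    unfolding proj_pts_def by simp
qed

lemma card_chart_zeros_le_n_zeros:
  fixes F :: "nat \<Rightarrow> (nat \<Rightarrow> nat) \<Rightarrow> 'k::{finite,field}"
  assumes charts: "\<forall>x\<in>V. \<exists>k v. k \<le> m \<and> x = chart_pt k m v"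
    and zeros: "\<forall>x\<in>V. \<forall>l<r. peval m d (F l) x = 0"
  shows "card V \<le> n_zeros r d m F"
proof -
  have "proj_class ` V \<subseteq> {P \<in> proj_pts m. \<forall>x\<in>P. \<forall>l<r. peval m d (F l) x = 0}"
  proof
    fix P assume "P \<in> proj_class ` V"
    then obtain x where "x \<in> V" "P = proj_class x"
      by blast
    moreover obtain k v where "k \<le> m" "x = chart_pt k m v"
      using charts \<open>x \<in> V\<close> by blast
    ultimately have kv: "k \<le> m" "chart_pt k m v \<in> V" "P = proj_class (chart_pt k m v)"
      by simp_all
    have "P \<in> proj_pts m"
      unfolding kv(3) proj_pts_def proj_class_def
      using kv(1) by (intro imageI) (auto simp: chart_pt_def intro!: exI[of _ k])
    moreover have "\<forall>x\<in>P. \<forall>l<r. peval m d (F l) x = 0"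
      using zeros kv(2) unfolding kv(3) proj_class_def by (auto simp: peval_homogeneous)
    ultimately show "P \<in> {P \<in> proj_pts m. \<forall>x\<in>P. \<forall>l<r. peval m d (F l) x = 0}"
      by blast
  qed
  then have "card (proj_class ` V) \<le> n_zeros r d m F"
    unfolding n_zeros_def by (rule card_mono[OF finite_subset[OF _ finite_proj_pts], rotated]) blast
  moreover have "inj_on proj_class V"
  proof (rule inj_onI)
    fix x y assume "x \<in> V" "y \<in> V" "proj_class x = proj_class y"
    moreover have "y \<in> proj_class y"
      unfolding proj_class_def by (auto intro!: exI[of _ 1])
    ultimately obtain s where "y = (\<lambda>t. s * x t)"
      unfolding proj_class_def by auto
    then show "x = y"
      using charts \<open>x \<in> V\<close> \<open>y \<in> V\<close> chart_pt_eq_scaled by metis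
  qed
  ultimately show ?thesis
    by (simp add: card_image)
qed

lemma n_zeros_le_e_max:
  fixes F :: "nat \<Rightarrow> (nat \<Rightarrow> nat) \<Rightarrow> 'k::{finite,field}"
  assumes "\<forall>l<r. F l \<in> hom_polys m d" "lin_indep r F"
  shows "n_zeros r d m F \<le> e_max TYPE('k) r d m"
proof -
  let ?S = "{n_zeros r d m F | F :: nat \<Rightarrow> (nat \<Rightarrow> nat) \<Rightarrow> 'k.
    (\<forall>l<r. F l \<in> hom_polys m d) \<and> lin_indep r F}"
  let ?N = "card (proj_pts m :: (nat \<Rightarrow> 'k) set set)"
  have "n_zeros r d m G \<le> ?N" for G :: "nat \<Rightarrow> (nat \<Rightarrow> nat) \<Rightarrow> 'k"
    unfolding n_zeros_def by (rule card_mono[OF finite_proj_pts]) blast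
  then have "?S \<subseteq> {..?N}"
    by blast
  then have "finite ?S"
    using finite_subset by blast
  moreover have "n_zeros r d m F \<in> ?S"
    using assms by blast
  ultimately show ?thesis
    unfolding e_max_def by (rule Max_ge)
qed

definition digit_lists :: "nat \<Rightarrow> nat \<Rightarrow> nat list set" where
  "digit_lists Q n = {c. set c \<subseteq> {..<Q} \<and> length c = n}"

lemma card_digit_lists: "card (digit_lists Q n) = Q ^ n"
  using card_lists_length_eq[of "{..<Q}" n] by (simp add: digit_lists_def)

lemma finite_digit_lists: "finite (digit_lists Q n)"
  using finite_lists_length_eq[of "{..<Q}" n] by (simp add: digit_lists_def)

lemma digit_lists_Suc: "digit_lists Q (Suc n) = (\<lambda>(x, c). x # c) ` ({..<Q} \<times> digit_lists Q n)"
proof (rule set_eqI)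
  fix l
  show "l \<in> digit_lists Q (Suc n) \<longleftrightarrow> l \<in> (\<lambda>(x, c). x # c) ` ({..<Q} \<times> digit_lists Q n)"
    unfolding digit_lists_def by (cases l) auto
qed

lemma tuples_eq: "tuples q e n = {b \<in> digit_lists q n. sum_list b \<le> e}"
  by (auto simp: tuples_def digit_lists_def)

text \<open>Counting the lists below \<open>\<alpha>\<close> is reading \<open>\<alpha>\<close> as a number in base \<open>Q\<close>.\<close>

lemma card_lex_less_digit_lists:
  assumes "\<alpha> \<in> digit_lists Q n"
  shows "card {c \<in> digit_lists Q n. c < \<alpha>} = (\<Sum>k<n. \<alpha> ! k * Q ^ (n - 1 - k))"
  using assms
proof (induction \<alpha> arbitrary: n)
  case Nil
  then show ?case
    by (simp add: digit_lists_def)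
next
  case (Cons a \<alpha>)
  then obtain n' where n: "n = Suc n'" and \<alpha>: "\<alpha> \<in> digit_lists Q n'" and a: "a < Q"
    by (cases n) (auto simp: digit_lists_def)
  let ?A = "(\<lambda>(x, c). x # c) ` ({..<a} \<times> digit_lists Q n')"
  let ?B = "(#) a ` {c \<in> digit_lists Q n'. c < \<alpha>}"
  have "inj_on (\<lambda>(x, c). x # c) X" for X :: "(nat \<times> nat list) set"
    by (rule inj_onI) auto
  then have A: "card ?A = a * Q ^ n'"
    by (simp add: card_image card_cartesian_product card_digit_lists)
  have B: "card ?B = (\<Sum>k<n'. \<alpha> ! k * Q ^ (n' - 1 - k))"
    using Cons.IH[OF \<alpha>] by (simp add: card_image)
  have "{c \<in> digit_lists Q n. c < a # \<alpha>} = ?A \<union> ?B"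
    using a unfolding n digit_lists_Suc by auto
  then have "card {c \<in> digit_lists Q n. c < a # \<alpha>} = card (?A \<union> ?B)"
    by simp
  also have "\<dots> = card ?A + card ?B"
    by (rule card_Un_disjoint) (auto intro!: finite_imageI simp: finite_digit_lists)
  also have "\<dots> = (\<Sum>k<n. (a # \<alpha>) ! k * Q ^ (n - 1 - k))"
    unfolding A B n by (subst sum.lessThan_Suc_shift) simp
  finally show ?case .
qed

lemma less_eq_list_of_pointwise:
  "length b = length c \<Longrightarrow> \<forall>k<length b. b ! k \<le> c ! k \<Longrightarrow> b \<le> (c :: nat list)"
proof (induction b arbitrary: c)
  case Nil
  then show ?case
    by simp
next
  case (Cons x b)
  then obtain y c' where c: "c = y # c'"
    by (cases c) auto
  have "x \<le> y"
    using Cons.prems c by force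
  moreover have "b \<le> c'"
    using Cons.prems c by (intro Cons.IH) force+
  ultimately show ?case
    using c by (auto simp: order.order_iff_strict)
qed

lemma sum_list_less_of_pointwise:
  assumes "length b = length c" "\<forall>k<length b. b ! k \<le> c ! k" "b \<noteq> c"
  shows "sum_list b < sum_list (c :: nat list)"
proof -
  obtain k where "k < length b" "b ! k < c ! k"
    using assms nth_equalityI[of b c] by force
  then have "(\<Sum>k = 0..<length b. b ! k) < (\<Sum>k = 0..<length b. c ! k)"
    using assms(2) by (intro sum_strict_mono_ex1) auto
  then show ?thesis
    using assms(1) by (simp add: sum_list_sum_nth)
qed

lemma bij_betw_card_greater:
  fixes T :: "'a::linorder set"
  assumes "finite T"
  shows "bij_betw (\<lambda>b. card {g \<in> T. b < g}) T {..<card T}"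
proof -
  let ?f = "\<lambda>b. card {g \<in> T. b < g}"
  have less: "?f b' < ?f b" if "b \<in> T" "b' \<in> T" "b < b'" for b b'
  proof -
    have "{g \<in> T. b' < g} \<subset> {g \<in> T. b < g}"
      using that by auto
    then show ?thesis
      using assms by (intro psubset_card_mono) auto
  qed
  have inj: "inj_on ?f T"
  proof (rule inj_onI, rule ccontr)
    fix b b' assume "b \<in> T" "b' \<in> T" "?f b = ?f b'" "b \<noteq> b'"
    from \<open>b \<noteq> b'\<close> show False
      by (rule linorder_neqE) (use less[of b b'] less[of b' b] \<open>b \<in> T\<close> \<open>b' \<in> T\<close> \<open>?f b = ?f b'\<close> in auto)
  qed
  have "?f ` T \<subseteq> {..<card T}"
  proof
    fix y assume "y \<in> ?f ` T"
    then obtain b where b: "b \<in> T" "y = ?f b"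
      by blast
    have "?f b \<le> card (T - {b})"
      using assms by (intro card_mono) auto
    also have "\<dots> < card T"
      using assms b(1) by (meson card_Diff1_less)
    finally show "y \<in> {..<card T}"
      using b by simp
  qed
  moreover have "card (?f ` T) = card {..<card T}"
    using card_image[OF inj] by simp
  ultimately have "?f ` T = {..<card T}"
    by (intro card_subset_eq) auto
  with inj show ?thesis
    unfolding bij_betw_def by blast
qed

lemma nth_desc_props:
  assumes "1 \<le> j" "j \<le> card (tuples q d n)"
  shows "nth_desc q d n j \<in> tuples q d n"
    and "card {g \<in> tuples q d n. nth_desc q d n j < g} = j - 1"
proof -
  let ?T = "tuples q d n" and ?f = "\<lambda>b. card {g \<in> tuples q d n. b < g}"
  have fin: "finite ?T"
    by (simp add: tuples_eq finite_digit_lists)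
  have bij: "bij_betw ?f ?T {..<card ?T}"
    by (rule bij_betw_card_greater[OF fin])
  have "j - 1 \<in> ?f ` ?T"
    using assms bij_betw_imp_surj_on[OF bij] by simp
  then obtain b where b: "b \<in> ?T" "?f b = j - 1"
    by (rule imageE) simp
  have lex: "lex_gt g b' \<longleftrightarrow> b' < g" for g b'
    by (simp add: lex_gt_def list_less_def)
  have "nth_desc q d n j = b"
    unfolding nth_desc_def lex
  proof (rule the_equality)
    show "b \<in> ?T \<and> ?f b = j - 1"
      using b by blast
    show "b' = b" if "b' \<in> ?T \<and> ?f b' = j - 1" for b'
      using that b inj_onD[OF bij_betw_imp_inj_on[OF bij], of b' b] by simp
  qed
  then show "nth_desc q d n j \<in> ?T" "?f (nth_desc q d n j) = j - 1"
    using b by simp_all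
qed

lemma card_tuples:
  assumes "e < q"
  shows "card (tuples q e n) = (n + e) choose e"
proof -
  have T: "tuples q e n = {b. length b = n \<and> sum_list b \<le> e}"
    unfolding tuples_def using assms by (auto dest: member_le_sum_list)
  let ?g = "\<lambda>b. b @ [e - sum_list b]"
  have "inj_on ?g {b. length b = n \<and> sum_list b \<le> e}"
    by (rule inj_onI) auto
  moreover have "?g ` {b. length b = n \<and> sum_list b \<le> e} = {l. length l = Suc n \<and> sum_list l = e}"
  proof (rule set_eqI, rule iffI)
    fix l assume l: "l \<in> {l. length l = Suc n \<and> sum_list l = e}"
    then obtain b x where "l = b @ [x]"
      by (cases l rule: rev_cases) auto
    with l show "l \<in> ?g ` {b. length b = n \<and> sum_list b \<le> e}"
      by (intro image_eqI[of _ _ b]) auto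
  qed auto
  ultimately have "card (tuples q e n) = card {l :: nat list. length l = Suc n \<and> sum_list l = e}"
    unfolding T by (simp add: card_image[symmetric])
  also have "\<dots> = (n + e) choose e"
    using card_length_sum_list[of "Suc n" e] by (simp add: add.commute)
  finally show ?thesis .
qed

definition mons_from :: "nat \<Rightarrow> nat \<Rightarrow> nat \<Rightarrow> (nat \<Rightarrow> nat) set" where
  "mons_from i m d = {a \<in> mons m d. \<forall>t<i. a t = 0}"

lemma card_mons_from:
  assumes "i \<le> m"
  shows "card (mons_from i m d) = (m - i + d) choose d"
proof -
  let ?g = "\<lambda>a. map a [i..<Suc m]"
  let ?L = "{l :: nat list. length l = Suc m - i \<and> sum_list l = d}"
  have sum_eq: "(\<Sum>t\<le>m. a t) = sum_list (?g a)" if "\<forall>t<i. a t = 0" for a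
  proof -
    have "(\<Sum>t\<le>m. a t) = (\<Sum>t\<in>{i..<Suc m}. a t)"
      by (rule sum.mono_neutral_right) (use that in auto)
    then show ?thesis
      by (metis sum_set_upt_conv_sum_list_nat set_upt)
  qed
  have "inj_on ?g (mons_from i m d)"
  proof (rule inj_onI, rule ext)
    fix a a' t assume a: "a \<in> mons_from i m d" "a' \<in> mons_from i m d" "?g a = ?g a'"
    show "a t = a' t"
    proof (cases "i \<le> t \<and> t \<le> m")
      case True
      then have "t \<in> set [i..<Suc m]"
        by (simp del: upt_Suc)
      then show ?thesis
        using a(3) by (simp add: map_eq_conv del: upt_Suc)
    next
      case False
      then show ?thesis
        using a(1,2) by (auto simp: mons_from_def mons_def)
    qed
  qed
  moreover have "?g ` mons_from i m d = ?L"
  proof (rule set_eqI, rule iffI)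
    fix l assume "l \<in> ?g ` mons_from i m d"
    then obtain a where "a \<in> mons_from i m d" "l = ?g a"
      by blast
    then show "l \<in> ?L"
      using sum_eq[of a] by (simp add: mons_from_def mons_def del: upt_Suc)
  next
    fix l assume l: "l \<in> ?L"
    define a where "a t = (if i \<le> t \<and> t \<le> m then l ! (t - i) else 0)" for t
    have "?g a = l"
      using l assms by (intro nth_equalityI) (auto simp: a_def simp del: upt_Suc)
    moreover have "\<forall>t<i. a t = 0" "\<forall>t>m. a t = 0"
      by (simp_all add: a_def)
    ultimately have "a \<in> mons_from i m d"
      using l sum_eq[of a] by (simp add: mons_from_def mons_def del: upt_Suc)
    with \<open>?g a = l\<close> show "l \<in> ?g ` mons_from i m d"
      by blast
  qed
  ultimately have "card (mons_from i m d) = card ?L"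
    by (metis card_image)
  also have "\<dots> = (m - i + d) choose d"
    using card_length_sum_list[of "Suc m - i" d] assms by (simp add: Suc_diff_le add.commute)
  finally show ?thesis .
qed

lemma card_mons_diff_mons_from:
  "i \<le> m \<Longrightarrow> card (mons m d - mons_from i m d) = ((m + d) choose d) - ((m - i + d) choose d)"
  using card_Diff_subset[of "mons_from i m d" "mons m d"] card_mons_from[of 0 m d] card_mons_from[of i m d]
  by (simp add: mons_from_def finite_mons finite_subset)

lemma sum_binomial_blocks:
  assumes "d \<ge> 1" "i \<le> Suc m"
  shows "(\<Sum>a=1..i. (m + d - a) choose (d - 1)) + ((m + d - i) choose d) = (m + d) choose d"
  using assms(2)
proof (induction i)
  case 0
  then show ?case
    by simp
next
  case (Suc i)
  obtain d' where d: "d = Suc d'"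
    using assms(1) by (cases d) auto
  have "m + d - i = Suc (m + d - Suc i)"
    using Suc.prems d by simp
  then have "(m + d - i) choose d = ((m + d - Suc i) choose d') + ((m + d - Suc i) choose d)"
    using d by simp
  then show ?case
    using Suc by (simp add: d)
qed

lemma exists_step_interval:
  fixes f :: "nat \<Rightarrow> 'a::linorder"
  shows "f 0 \<le> r \<Longrightarrow> r < f N \<Longrightarrow> \<exists>i<N. f i \<le> r \<and> r < f (Suc i)"
proof (induction N)
  case 0
  then show ?case
    by simp
next
  case (Suc N)
  then show ?case
    by (cases "r < f N") (auto intro: less_SucI simp: not_less)
qed

lemma pp_eq_sum: "pp q (int n - 1) = (\<Sum>e<n. q ^ e)"
proof (cases n)
  case (Suc n')
  then show ?thesis
    by (simp add: pp_def lessThan_Suc_atMost)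
qed (simp add: pp_def)

lemma sum_lessThan_add:
  fixes B N :: nat
  shows "(\<Sum>l<B + N. f l) = (\<Sum>l<B. f l) + (\<Sum>s<N. f (B + s) :: 'a::comm_monoid_add)"
  by (induction N) (simp_all add: add.assoc)

lemma triangular_family_independent:
  fixes g :: "'a \<Rightarrow> 'b \<Rightarrow> 'k::field" and w :: "'a \<Rightarrow> nat"
  assumes "finite S"
    and diag: "\<forall>\<beta>\<in>S. g \<beta> (y \<beta>) \<noteq> 0"
    and lower: "\<forall>\<beta>\<in>S. \<forall>\<beta>'\<in>S. \<beta>' \<noteq> \<beta> \<and> g \<beta>' (y \<beta>) \<noteq> 0 \<longrightarrow> w \<beta>' < w \<beta>"
    and zero: "\<forall>\<beta>\<in>S. (\<Sum>\<beta>'\<in>S. c \<beta>' * g \<beta>' (y \<beta>)) = 0"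
  shows "\<forall>\<beta>\<in>S. c \<beta> = 0"
proof (rule ccontr)
  assume "\<not> (\<forall>\<beta>\<in>S. c \<beta> = 0)"
  then obtain \<beta> where \<beta>: "\<beta> \<in> S" "c \<beta> \<noteq> 0"
    and min: "\<forall>\<beta>'. \<beta>' \<in> S \<and> c \<beta>' \<noteq> 0 \<longrightarrow> w \<beta> \<le> w \<beta>'"
    using ex_has_least_nat[of "\<lambda>\<beta>. \<beta> \<in> S \<and> c \<beta> \<noteq> 0" _ w] by blast
  have "c \<beta>' * g \<beta>' (y \<beta>) = 0" if "\<beta>' \<in> S - {\<beta>}" for \<beta>'
    using that \<beta>(1) lower min by (metis DiffE insertCI leD mult_eq_0_iff)
  then have "(\<Sum>\<beta>'\<in>S - {\<beta>}. c \<beta>' * g \<beta>' (y \<beta>)) = 0"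
    by (rule sum.neutral[rule_format])
  then have "(\<Sum>\<beta>'\<in>S. c \<beta>' * g \<beta>' (y \<beta>)) = c \<beta> * g \<beta> (y \<beta>)"
    using sum.remove[OF \<open>finite S\<close> \<beta>(1), of "\<lambda>\<beta>'. c \<beta>' * g \<beta>' (y \<beta>)"] by simp
  then show False
    using zero diag \<beta> by simp
qed

definition G_fun :: "(nat \<Rightarrow> 'k::field) \<Rightarrow> nat \<Rightarrow> nat \<Rightarrow> nat list \<Rightarrow> (nat \<Rightarrow> 'k) \<Rightarrow> 'k" where
  "G_fun a i d \<beta> x =
     x i ^ (d - sum_list \<beta>) * (\<Prod>k<length \<beta>. \<Prod>t<\<beta> ! k. x (Suc (i + k)) - a t * x i)"

lemma hom_poly_fun_G_fun:
  assumes "i + length \<beta> \<le> m" "sum_list \<beta> \<le> d"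
  shows "hom_poly_fun m d (G_fun a i d \<beta>)"
proof -
  have "hom_poly_fun m ((d - sum_list \<beta>) * 1) (\<lambda>x. x i ^ (d - sum_list \<beta>))"
    using assms(1) by (intro hom_poly_fun_power hom_poly_fun_var) simp
  moreover have "hom_poly_fun m (\<Sum>k<length \<beta>. \<Sum>t<\<beta> ! k. 1)
      (\<lambda>x. \<Prod>k<length \<beta>. \<Prod>t<\<beta> ! k. x (Suc (i + k)) - a t * x i)"
    using assms(1) by (intro hom_poly_fun_prod ballI hom_poly_fun_linear_form finite_lessThan) auto
  moreover have "(\<Sum>k<length \<beta>. \<Sum>t<\<beta> ! k. 1) = sum_list \<beta>"
    by (simp add: sum_list_sum_nth atLeast0LessThan)
  ultimately have "hom_poly_fun m ((d - sum_list \<beta>) + sum_list \<beta>) (G_fun a i d \<beta>)"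
    unfolding G_fun_def[abs_def] using hom_poly_fun_mult by fastforce
  then show ?thesis
    using assms(2) by simp
qed

lemma G_fun_eq_0_on_hyperplane: "x i = 0 \<Longrightarrow> sum_list \<beta> < d \<Longrightarrow> G_fun a i d \<beta> x = 0"
  by (simp add: G_fun_def)

lemma G_fun_chart_pt_eq_0_iff:
  assumes a: "inj_on a {..<Q}" and "i \<le> m"
    and c: "c \<in> digit_lists Q (m - i)" and \<beta>: "\<beta> \<in> digit_lists Q (m - i)"
  shows "G_fun a i d \<beta> (chart_pt i m (map a c)) = 0 \<longleftrightarrow> (\<exists>k<m - i. c ! k < \<beta> ! k)"
proof -
  have digit: "c ! k < Q" "\<beta> ! k < Q" if "k < m - i" for k
  proof -
    have "c ! k \<in> set c" "\<beta> ! k \<in> set \<beta>"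
      using that c \<beta> by (simp_all add: digit_lists_def)
    then show "c ! k < Q" "\<beta> ! k < Q"
      using c \<beta> by (auto simp: digit_lists_def)
  qed
  have entry: "chart_pt i m (map a c) (Suc (i + k)) = a (c ! k)" if "k < m - i" for k
    using that c by (simp add: chart_pt_entry digit_lists_def)
  have "G_fun a i d \<beta> (chart_pt i m (map a c)) = (\<Prod>k<m - i. \<Prod>t<\<beta> ! k. a (c ! k) - a t)"
    using \<beta> unfolding G_fun_def chart_pt_lead
    by (simp add: digit_lists_def) (rule prod.cong, simp_all add: entry)
  also have "\<dots> = 0 \<longleftrightarrow> (\<exists>k<m - i. \<exists>t<\<beta> ! k. a (c ! k) = a t)"
    by auto
  also have "\<dots> \<longleftrightarrow> (\<exists>k<m - i. c ! k < \<beta> ! k)"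
  proof -
    have "a (c ! k) = a t \<longleftrightarrow> c ! k = t" if "k < m - i" "t < \<beta> ! k" for k t
      using that digit[OF that(1)] inj_onD[OF a, of "c ! k" t] by auto
    then show ?thesis
      by auto
  qed
  finally show ?thesis .
qed

lemma G_funs_independent:
  fixes bs :: "nat \<Rightarrow> nat list"
  assumes a: "inj_on a {..<Q}" and "i \<le> m"
    and bs: "inj_on bs {..<N}" "\<forall>s<N. bs s \<in> digit_lists Q (m - i)"
    and zero: "\<forall>s<N. (\<Sum>s'<N. cs s' * G_fun a i d (bs s') (chart_pt i m (map a (bs s)))) = 0"
  shows "\<forall>s<N. cs s = 0"
proof -
  let ?g = "\<lambda>s. G_fun a i d (bs s)" and ?y = "\<lambda>s. chart_pt i m (map a (bs s))"
  have zero_iff: "?g s' (?y s) = 0 \<longleftrightarrow> (\<exists>k<m - i. bs s ! k < bs s' ! k)" if "s < N" "s' < N" for s s'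
    using G_fun_chart_pt_eq_0_iff[OF a \<open>i \<le> m\<close>] bs(2) that by blast
  have diag: "\<forall>s\<in>{..<N}. ?g s (?y s) \<noteq> 0"
    using zero_iff by simp
  have lower: "\<forall>s\<in>{..<N}. \<forall>s'\<in>{..<N}. s' \<noteq> s \<and> ?g s' (?y s) \<noteq> 0 \<longrightarrow>
      sum_list (bs s') < sum_list (bs s)"
  proof (intro ballI impI)
    fix s s' assume s: "s \<in> {..<N}" "s' \<in> {..<N}" and ne: "s' \<noteq> s \<and> ?g s' (?y s) \<noteq> 0"
    then have "length (bs s') = length (bs s)" "bs s' \<noteq> bs s"
      using bs by (auto simp: digit_lists_def dest: inj_onD)
    moreover have "\<not> (\<exists>k<m - i. bs s ! k < bs s' ! k)"
      using zero_iff[of s s'] s ne by simp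
    then have "\<forall>k<m - i. bs s' ! k \<le> bs s ! k"
      by (meson not_less)
    moreover have "length (bs s') = m - i"
      using bs(2) s by (simp add: digit_lists_def)
    ultimately show "sum_list (bs s') < sum_list (bs s)"
      by (intro sum_list_less_of_pointwise) simp_all
  qed
  have "\<forall>s\<in>{..<N}. cs s = 0"
    using triangular_family_independent[of "{..<N}" ?g ?y "\<lambda>s. sum_list (bs s)" cs] diag lower zero
    by simp
  then show ?thesis
    by simp
qed

lemma lin_indep_monomials_append:
  fixes \<mu> :: "nat \<Rightarrow> nat \<Rightarrow> nat" and G :: "nat \<Rightarrow> (nat \<Rightarrow> nat) \<Rightarrow> 'k::field"
  assumes \<mu>: "inj_on \<mu> {..<B}" "\<forall>l<B. \<mu> l \<in> mons m d \<and> (\<exists>t<i. \<mu> l t \<noteq> 0)"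
    and G: "\<And>cs. \<forall>x. (\<forall>t<i. x t = 0) \<longrightarrow> (\<Sum>s<N. cs s * peval m d (G s) x) = 0
      \<Longrightarrow> \<forall>s<N. cs s = 0"
  shows "lin_indep (B + N) (\<lambda>l. if l < B then (\<lambda>b. if b = \<mu> l then 1 else 0) else G (l - B))"
    (is "lin_indep _ ?F")
  unfolding lin_indep_def
proof (intro allI impI)
  fix cs :: "nat \<Rightarrow> 'k" and l
  assume z: "\<forall>b. (\<Sum>l<B + N. cs l * ?F l b) = 0" and "l < B + N"
  have mon0: "peval m d (?F l) x = 0" if l: "l < B" and x: "\<forall>t<i. x t = 0" for l x
    using \<mu>(2) l x peval_delta_eq_0[of "\<mu> l" m d _ x] by auto
  have "\<forall>s<N. cs (B + s) = 0"
  proof (rule G, intro allI impI)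
    fix x :: "nat \<Rightarrow> 'k" assume x: "\<forall>t<i. x t = 0"
    have "(\<lambda>b. \<Sum>l<B + N. cs l * ?F l b) = (\<lambda>b. 0)"
      using z by simp
    then have "(\<Sum>l<B + N. cs l * peval m d (?F l) x) = 0"
      using peval_linear_combination[of m d cs ?F "B + N" x] by (simp add: peval_def)
    then show "(\<Sum>s<N. cs (B + s) * peval m d (G s) x) = 0"
      using mon0 x by (simp add: sum_lessThan_add)
  qed
  moreover have "cs l = 0" if "l < B"
  proof -
    have "(\<Sum>l'<B. cs l' * ?F l' (\<mu> l)) = (\<Sum>l'<B. if l' = l then cs l' else 0)"
      using inj_onD[OF \<mu>(1), of l] \<open>l < B\<close> by (intro sum.cong) auto
    also have "\<dots> = cs l"
      using \<open>l < B\<close> by simp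
    finally have "(\<Sum>l'<B + N. cs l' * ?F l' (\<mu> l)) = cs l"
      using \<open>\<forall>s<N. cs (B + s) = 0\<close> by (simp add: sum_lessThan_add)
    then show ?thesis
      using z by simp
  qed
  ultimately show "cs l = 0"
    using \<open>l < B + N\<close> by (cases "l < B") (auto dest: spec[of _ "l - B"])
qed

lemma exists_vanishing_family:
  fixes a :: "nat \<Rightarrow> 'k::field"
  assumes a: "inj_on a {..<q}" and "1 \<le> d" "i \<le> m"
    and S: "S \<subseteq> tuples q (d - 1) (m - i)"
    and C: "C \<subseteq> digit_lists q (m - i)"
    and sep: "\<forall>c\<in>C. \<forall>\<beta>\<in>S. \<exists>k<m - i. c ! k < \<beta> ! k"
    and r: "r = card (mons m d - mons_from i m d) + card S"
  obtains F where "\<forall>l<r. F l \<in> hom_polys m d" "lin_indep r F"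
    "\<forall>l<r. \<forall>k v. i < k \<longrightarrow> peval m d (F l) (chart_pt k m v) = 0"
    "\<forall>l<r. \<forall>c\<in>C. peval m d (F l) (chart_pt i m (map a c)) = 0"
proof -
  define M where "M = mons m d - mons_from i m d"
  have "finite S"
    using S by (rule finite_subset) (simp add: tuples_eq finite_digit_lists)
  obtain \<mu> where \<mu>: "bij_betw \<mu> {..<card M} M"
    using ex_bij_betw_nat_finite[of M] finite_mons by (auto simp: M_def atLeast0LessThan)
  obtain bs where bs: "bij_betw bs {..<card S} S"
    using ex_bij_betw_nat_finite[OF \<open>finite S\<close>] by (auto simp: atLeast0LessThan)
  have bs_digits: "bs s \<in> digit_lists q (m - i)" "sum_list (bs s) < d" if "s < card S" for s
    using bij_betwE[OF bs] that S \<open>1 \<le> d\<close> by (auto simp: tuples_eq)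
  have "\<exists>c. c \<in> hom_polys m d \<and> peval m d c = G_fun a i d (bs s)" if "s < card S" for s
  proof -
    have "hom_poly_fun m d (G_fun a i d (bs s))"
      using bs_digits[OF that] \<open>i \<le> m\<close> by (intro hom_poly_fun_G_fun) (auto simp: digit_lists_def)
    then show ?thesis
      by (rule hom_poly_fun_in_hom_polys) blast
  qed
  then obtain Gc where Gc: "\<And>s. s < card S \<Longrightarrow> Gc s \<in> hom_polys m d \<and> peval m d (Gc s) = G_fun a i d (bs s)"
    by metis
  define F where "F = (\<lambda>l. if l < card M then (\<lambda>b. if b = \<mu> l then 1 else 0) else Gc (l - card M))"
  have \<mu>_mons: "\<forall>l<card M. \<mu> l \<in> mons m d \<and> (\<exists>t<i. \<mu> l t \<noteq> 0)"
    using bij_betwE[OF \<mu>] by (auto simp: M_def mons_from_def)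
  have F_mon: "peval m d (F l) x = 0" if "l < card M" "\<forall>t<i. x t = 0" for l x
    using \<mu>_mons that peval_delta_eq_0[of "\<mu> l" m d _ x] by (auto simp: F_def)
  have F_G: "peval m d (F (card M + s)) = G_fun a i d (bs s)" if "s < card S" for s
    using Gc[OF that] by (simp add: F_def)
  show ?thesis
  proof (rule that)
    show "\<forall>l<r. F l \<in> hom_polys m d"
      using \<mu>_mons Gc by (auto simp: r M_def[symmetric] F_def hom_polys_def)
    have "lin_indep (card M + card S) F"
      unfolding F_def
    proof (rule lin_indep_monomials_append[OF bij_betw_imp_inj_on[OF \<mu>] \<mu>_mons])
      fix cs :: "nat \<Rightarrow> 'k"
      assume h: "\<forall>x. (\<forall>t<i. x t = 0) \<longrightarrow> (\<Sum>s<card S. cs s * peval m d (Gc s) x) = 0"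
      show "\<forall>s<card S. cs s = 0"
      proof (rule G_funs_independent[OF a \<open>i \<le> m\<close> bij_betw_imp_inj_on[OF bs]])
        show "\<forall>s<card S. bs s \<in> digit_lists q (m - i)"
          using bs_digits by blast
        show "\<forall>s<card S. (\<Sum>s'<card S. cs s' * G_fun a i d (bs s') (chart_pt i m (map a (bs s)))) = 0"
          using h Gc by (simp add: chart_pt_below)
      qed
    qed
    then show "lin_indep r F"
      by (simp add: r M_def)
    show "\<forall>l<r. \<forall>k v. i < k \<longrightarrow> peval m d (F l) (chart_pt k m v) = 0"
    proof (intro allI impI)
      fix l k v assume "l < r" "i < k"
      then show "peval m d (F l) (chart_pt k m v) = 0"
        using F_mon[of l] F_G[of "l - card M"] bs_digits(2)[of "l - card M"]
          G_fun_eq_0_on_hyperplane[of "chart_pt k m v" i "bs (l - card M)" d a]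
        by (cases "l < card M") (auto simp: r M_def chart_pt_below)
    qed
    show "\<forall>l<r. \<forall>c\<in>C. peval m d (F l) (chart_pt i m (map a c)) = 0"
    proof (intro allI impI ballI)
      fix l c assume "l < r" "c \<in> C"
      then show "peval m d (F l) (chart_pt i m (map a c)) = 0"
        using F_mon[of l] F_G[of "l - card M"] bs_digits[of "l - card M"] C sep bij_betwE[OF bs]
          G_fun_chart_pt_eq_0_iff[OF a \<open>i \<le> m\<close>, of c "bs (l - card M)" d]
        by (cases "l < card M") (auto simp: r M_def chart_pt_below)
    qed
  qed
qed

lemma card_chart_zero_points:
  fixes a :: "nat \<Rightarrow> 'k::{finite,field}"
  assumes a: "inj_on a {..<q}" and "i \<le> m" and C: "C \<subseteq> digit_lists q (m - i)"
  shows "card ((\<Union>k\<in>{i<..m}. chart_pt k m ` {v. length v = m - k}) \<union> chart_pt i m ` map a ` C)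
    = card C + (\<Sum>e<m - i. card (UNIV :: 'k set) ^ e)"
proof -
  let ?V = "\<Union>k\<in>{i<..m}. chart_pt k m ` {v :: 'k list. length v = m - k}"
  have fin: "finite (chart_pt k m ` {v :: 'k list. length v = m - k})" for k
    using finite_lists_length_eq[of "UNIV :: 'k set"] by simp
  have "card ?V = (\<Sum>k\<in>{i<..m}. card (UNIV :: 'k set) ^ (m - k))"
    using fin by (subst card_UN_disjoint) (auto simp: card_chart_pts dest: chart_pt_neq)
  also have "\<dots> = (\<Sum>e<m - i. card (UNIV :: 'k set) ^ e)"
    by (rule sum.reindex_bij_witness[of _ "\<lambda>e. m - e" "\<lambda>k. m - k"]) auto
  finally have card_V: "card ?V = (\<Sum>e<m - i. card (UNIV :: 'k set) ^ e)" .
  have "inj_on (map a) C"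
    using C a by (intro inj_on_mapI) (auto simp: digit_lists_def intro: inj_on_subset)
  moreover have "inj_on (chart_pt i m) (map a ` C)"
    using C by (intro inj_on_subset[OF inj_on_chart_pt]) (auto simp: digit_lists_def)
  ultimately have card_C: "card (chart_pt i m ` map a ` C) = card C"
    by (simp add: card_image)
  have "?V \<inter> chart_pt i m ` map a ` C = {}"
    by (auto simp: chart_pt_neq)
  moreover have "finite (chart_pt i m ` map a ` C)"
    using C by (intro finite_imageI finite_subset[OF _ finite_digit_lists])
  ultimately show ?thesis
    using card_Un_disjoint[of ?V] fin card_V card_C by simp
qed

lemma e_max_ge_card_chart_zeros:
  fixes q d m i r :: nat
  defines "q \<equiv> card (UNIV :: 'k::{finite,field} set)"
  assumes "1 \<le> d" "i \<le> m"
    and S: "S \<subseteq> tuples q (d - 1) (m - i)"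
    and C: "C \<subseteq> digit_lists q (m - i)"
    and sep: "\<forall>c\<in>C. \<forall>\<beta>\<in>S. \<exists>k<m - i. c ! k < \<beta> ! k"
    and r: "r = card (mons m d - mons_from i m d) + card S"
  shows "card C + (\<Sum>e<m - i. q ^ e) \<le> e_max TYPE('k) r d m"
proof -
  obtain a :: "nat \<Rightarrow> 'k" where "bij_betw a {..<q} UNIV"
    using ex_bij_betw_nat_finite[of "UNIV :: 'k set"] by (auto simp: q_def atLeast0LessThan)
  then have a: "inj_on a {..<q}"
    by (rule bij_betw_imp_inj_on)
  obtain F where F: "\<forall>l<r. F l \<in> hom_polys m d" "lin_indep r F"
    "\<forall>l<r. \<forall>k v. i < k \<longrightarrow> peval m d (F l) (chart_pt k m v) = 0"
    "\<forall>l<r. \<forall>c\<in>C. peval m d (F l) (chart_pt i m (map a c)) = 0"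
    using exists_vanishing_family[OF a assms(2-7)] by blast
  let ?V = "(\<Union>k\<in>{i<..m}. chart_pt k m ` {v. length v = m - k}) \<union> chart_pt i m ` map a ` C"
  have "card C + (\<Sum>e<m - i. q ^ e) = card ?V"
    unfolding q_def by (rule card_chart_zero_points[OF a \<open>i \<le> m\<close> C, symmetric])
  also have "\<dots> \<le> n_zeros r d m F"
    using F(3,4) \<open>i \<le> m\<close> by (intro card_chart_zeros_le_n_zeros) auto
  also have "\<dots> \<le> e_max TYPE('k) r d m"
    by (rule n_zeros_le_e_max[OF F(1,2)])
  finally show ?thesis .
qed

lemma binomial_block_decomposition:
  assumes "1 \<le> d" "r < (m + d) choose d"
  shows "\<exists>i j. r = j + (\<Sum>a=1..i. (m + d - a) choose (d - 1)) \<and> i \<le> m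
    \<and> j < (m + d - i - 1) choose (d - 1)"
proof -
  define s where "s i = (\<Sum>a=1..i. (m + d - a) choose (d - 1))" for i
  have "s (Suc m) = (m + d) choose d"
    using sum_binomial_blocks[OF assms(1), of "Suc m" m] assms(1) by (simp add: s_def binomial_eq_0)
  then obtain i where "i < Suc m" "s i \<le> r" "r < s (Suc i)"
    using exists_step_interval[of s r "Suc m"] assms(2) by (auto simp: s_def)
  moreover have "s (Suc i) = s i + ((m + d - i - 1) choose (d - 1))"
    by (simp add: s_def)
  ultimately show ?thesis
    by (intro exI[of _ i] exI[of _ "r - s i"]) (auto simp: s_def)
qed

lemma exists_separated_tuples:
  assumes "1 \<le> e" "e < q" "1 \<le> n" "1 \<le> j" "j \<le> (n + e) choose e"
  obtains S C where "S \<subseteq> tuples q e n" "card S = j" "C \<subseteq> digit_lists q n" "card C = H q j e n"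
    "\<forall>c\<in>C. \<forall>\<beta>\<in>S. \<exists>k<n. c ! k < \<beta> ! k"
proof -
  define T where "T = tuples q e n"
  define \<alpha> where "\<alpha> = nth_desc q e n j"
  have "j \<le> card T"
    using assms card_tuples[of e q n] by (simp add: T_def)
  then have \<alpha>: "\<alpha> \<in> T" "card {g \<in> T. \<alpha> < g} = j - 1"
    using nth_desc_props[of j q e n] assms(4) by (simp_all add: T_def \<alpha>_def)
  then have \<alpha>_digits: "\<alpha> \<in> digit_lists q n"
    by (simp add: T_def tuples_eq)
  define S where "S = {g \<in> T. \<alpha> \<le> g}"
  define C where "C = {c \<in> digit_lists q n. c < \<alpha>}"
  show thesis
  proof (rule that)
    show "S \<subseteq> tuples q e n" "C \<subseteq> digit_lists q n"
      by (auto simp: S_def T_def C_def)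
    have "S = insert \<alpha> {g \<in> T. \<alpha> < g}"
      using \<alpha>(1) by (auto simp: S_def)
    then show "card S = j"
      using \<alpha> assms(4) by (simp add: T_def tuples_eq finite_digit_lists)
    show "card C = H q j e n"
      using card_lex_less_digit_lists[OF \<alpha>_digits] assms(1,3,4)
      by (simp add: C_def H_def \<alpha>_def)
    show "\<forall>c\<in>C. \<forall>\<beta>\<in>S. \<exists>k<n. c ! k < \<beta> ! k"
    proof (intro ballI, rule ccontr)
      fix c \<beta> assume "c \<in> C" "\<beta> \<in> S" "\<not> (\<exists>k<n. c ! k < \<beta> ! k)"
      then have "\<forall>k<n. \<beta> ! k \<le> c ! k"
        by (meson not_less)
      moreover have "length \<beta> = n" "length c = n"
        using \<open>c \<in> C\<close> \<open>\<beta> \<in> S\<close> by (auto simp: C_def S_def T_def tuples_eq digit_lists_def)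
      ultimately have "\<beta> \<le> c"
        by (intro less_eq_list_of_pointwise) simp_all
      moreover have "c < \<alpha>" "\<alpha> \<le> \<beta>"
        using \<open>c \<in> C\<close> \<open>\<beta> \<in> S\<close> by (simp_all add: C_def S_def)
      ultimately show False
        by simp
    qed
  qed
qed

lemma e_max_lower_bound:
  fixes d m i j r :: nat
  defines "q \<equiv> card (UNIV :: 'k::{finite,field} set)"
  assumes "1 \<le> d" "d \<le> q" "i \<le> m"
    and r: "r = j + (\<Sum>a=1..i. (m + d - a) choose (d - 1))"
    and j: "j < (m + d - i - 1) choose (d - 1)"
  shows "H q j (d - 1) (m - i) + pp q (int m - int i - 1) \<le> e_max TYPE('k) r d m"
proof -
  define n where "n = m - i"
  have r': "r = card (mons m d - mons_from i m d) + j"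
    using r card_mons_diff_mons_from[OF \<open>i \<le> m\<close>, of d]
      sum_binomial_blocks[OF \<open>1 \<le> d\<close>, of i m] \<open>i \<le> m\<close>
    by (simp add: add.commute)
  have pp: "pp q (int m - int i - 1) = (\<Sum>e<n. q ^ e)"
    using pp_eq_sum[of q n] \<open>i \<le> m\<close> by (simp add: n_def of_nat_diff)
  note e_max_ge = e_max_ge_card_chart_zeros[where 'k = 'k, of d i m, folded q_def n_def]
  show ?thesis
  proof (cases "j = 0")
    case True
    then have "card (digit_lists q n) + (\<Sum>e<n. q ^ e) \<le> e_max TYPE('k) r d m"
      using e_max_ge[of "{}" "digit_lists q n" r] assms r' by simp
    then show ?thesis
      using True pp by (simp add: H_def card_digit_lists n_def)
  next
    case False
    then have "d \<noteq> 1" "i \<noteq> m"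
      using j \<open>1 \<le> d\<close> by auto
    moreover have "m + d - i - 1 = n + (d - 1)"
      using \<open>i \<le> m\<close> \<open>1 \<le> d\<close> by (simp add: n_def)
    ultimately have "1 \<le> d - 1" "d - 1 < q" "1 \<le> n" "1 \<le> j" "j \<le> (n + (d - 1)) choose (d - 1)"
      using j False assms(2-4) by (simp_all add: n_def)
    then obtain S C where "S \<subseteq> tuples q (d - 1) n" "card S = j" "C \<subseteq> digit_lists q n"
      "card C = H q j (d - 1) n" "\<forall>c\<in>C. \<forall>\<beta>\<in>S. \<exists>k<n. c ! k < \<beta> ! k"
      by (rule exists_separated_tuples)
    then have "H q j (d - 1) n + (\<Sum>e<n. q ^ e) \<le> e_max TYPE('k) r d m"
      using e_max_ge[of S C r] assms r' by (simp add: add.commute)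
    then show ?thesis
      using pp by (simp add: n_def)
  qed
qed

theorem theorem5p10:
  fixes d r m :: nat
  defines "q \<equiv> card (UNIV :: ('k::{finite,field}) set)"
  assumes "m \<ge> 1" "d \<ge> 1" "r \<ge> 1" "d \<le> q" "r \<le> (m + d) choose d"
  shows "(r < (m + d) choose d \<longrightarrow>
           (\<exists>i j. r = j + (\<Sum>a=1..i. (m + d - a) choose (d - 1)) \<and> i \<le> m
                  \<and> j < (m + d - i - 1) choose (d - 1)) \<and>
           (\<forall>i j. r = j + (\<Sum>a=1..i. (m + d - a) choose (d - 1)) \<and> i \<le> m
                  \<and> j < (m + d - i - 1) choose (d - 1) \<longrightarrow>
              e_max TYPE('k) r d m \<ge> H q j (d - 1) (m - i) + pp q (int m - int i - 1)))
       \<and> (r = (m + d) choose d \<longrightarrow>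
              e_max TYPE('k) r d m \<ge> H q 1 (d - 1) (m - m) + pp q (int m - int m - 1))"
proof (intro conjI impI allI)
  assume "r < (m + d) choose d"
  then show "\<exists>i j. r = j + (\<Sum>a=1..i. (m + d - a) choose (d - 1)) \<and> i \<le> m
      \<and> j < (m + d - i - 1) choose (d - 1)"
    using binomial_block_decomposition \<open>d \<ge> 1\<close> by blast
next
  fix i j
  assume "r = j + (\<Sum>a=1..i. (m + d - a) choose (d - 1)) \<and> i \<le> m
    \<and> j < (m + d - i - 1) choose (d - 1)"
  then show "e_max TYPE('k) r d m \<ge> H q j (d - 1) (m - i) + pp q (int m - int i - 1)"
    using e_max_lower_bound assms unfolding q_def by blast
next
  show "e_max TYPE('k) r d m \<ge> H q 1 (d - 1) (m - m) + pp q (int m - int m - 1)"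
    by (simp add: H_def pp_def)
qed

end
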